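(* Let $f:M\to M$ be a $C^1$ Anosov diffeomorphism of a compact surface and $\mu$ an $f$-invariant ergodic probability measure. If there exist $x_0\in M$ and a measurable subset of the stable leaf $\mathcal F^s(x_0)$ with positive $\mu$-measure, then $\mu$ is periodic, i.e. supported on a single periodic orbit.
   Context: $\mathcal F^s$ is the $f$-invariant stable foliation of $f$, with leaves tangent to $E^s$; $\mathcal F^s(x_0)$ is the leaf through $x_0$. *)

theory Defs
  imports "HOL-Analysis.Analysis" "HOL-Probability.Probability"
begin

text \<open>Compact surfaces are modelled as compact C^1 embedded 2-dimensional submanifolds
  (without boundary) of a Euclidean space (every compact surface embeds, Whitney).\<close>

definition C1_surface :: "'a::euclidean_space set \<Rightarrow> bool" where
  "C1_surface M \<longleftrightarrow>
     (\<forall>x\<in>M. \<exists>V W (\<phi>::real \<times> real \<Rightarrow> 'a) \<psi> \<phi>'.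
        open V \<and> open W \<and> x \<in> W \<and>
        homeomorphism V (M \<inter> W) \<phi> \<psi> \<and>
        (\<forall>v\<in>V. (\<phi> has_derivative blinfun_apply (\<phi>' v)) (at v)) \<and>
        continuous_on V \<phi>' \<and>
        (\<forall>v\<in>V. inj (blinfun_apply (\<phi>' v))))"

definition compact_surface :: "'a::euclidean_space set \<Rightarrow> bool" where
  "compact_surface M \<longleftrightarrow> M \<noteq> {} \<and> compact M \<and> connected M \<and> C1_surface M"

definition tangent_space :: "'a::euclidean_space set \<Rightarrow> 'a \<Rightarrow> 'a set" where
  "tangent_space M x = {v. \<exists>(\<gamma>::real \<Rightarrow> 'a) \<epsilon>. \<epsilon> > 0 \<and> (\<forall>t\<in>{-\<epsilon><..<\<epsilon>}. \<gamma> t \<in> M) \<and>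
      \<gamma> 0 = x \<and> (\<gamma> has_vector_derivative v) (at 0)}"

definition local_C1_ext :: "'a::euclidean_space set \<Rightarrow> ('a \<Rightarrow> 'a) \<Rightarrow> 'a \<Rightarrow> ('a \<Rightarrow> 'a) \<Rightarrow> ('a \<Rightarrow> ('a \<Rightarrow>\<^sub>L 'a)) \<Rightarrow> bool" where
  "local_C1_ext M f x F F' \<longleftrightarrow> (\<exists>U. open U \<and> x \<in> U \<and> (\<forall>y\<in>M \<inter> U. F y = f y) \<and>
      (\<forall>y\<in>U. (F has_derivative blinfun_apply (F' y)) (at y)) \<and> continuous_on U F')"

definition C1_map_on :: "'a::euclidean_space set \<Rightarrow> ('a \<Rightarrow> 'a) \<Rightarrow> bool" where
  "C1_map_on M f \<longleftrightarrow> (\<forall>x\<in>M. \<exists>F F'. local_C1_ext M f x F F')"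

definition C1_diffeo_on :: "'a::euclidean_space set \<Rightarrow> ('a \<Rightarrow> 'a) \<Rightarrow> bool" where
  "C1_diffeo_on M f \<longleftrightarrow> bij_betw f M M \<and> C1_map_on M f \<and> C1_map_on M (inv_into M f)"

text \<open>The differential Df_x (meaningful on tangent_space M x, where it is independent of the extension).\<close>
definition dmap :: "'a::euclidean_space set \<Rightarrow> ('a \<Rightarrow> 'a) \<Rightarrow> 'a \<Rightarrow> 'a \<Rightarrow> 'a" where
  "dmap M f x = (SOME L. \<exists>F F'. local_C1_ext M f x F F' \<and> L = blinfun_apply (F' x))"

fun dpow :: "'a::euclidean_space set \<Rightarrow> ('a \<Rightarrow> 'a) \<Rightarrow> nat \<Rightarrow> 'a \<Rightarrow> 'a \<Rightarrow> 'a" where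
  "dpow M f 0 x = id"
| "dpow M f (Suc n) x = dmap M f ((f ^^ n) x) \<circ> dpow M f n x"

definition anosov :: "'a::euclidean_space set \<Rightarrow> ('a \<Rightarrow> 'a) \<Rightarrow> bool" where
  "anosov M f \<longleftrightarrow> C1_diffeo_on M f \<and>
    (\<exists>Es Eu (C::real) (lam::real). C > 0 \<and> 0 < lam \<and> lam < 1 \<and>
      (\<forall>x\<in>M. subspace (Es x) \<and> subspace (Eu x) \<and> Es x \<inter> Eu x = {0} \<and>
         {a + b | a b. a \<in> Es x \<and> b \<in> Eu x} = tangent_space M x \<and>
         dmap M f x ` Es x = Es (f x) \<and> dmap M f x ` Eu x = Eu (f x) \<and>
         (\<forall>n. \<forall>v\<in>Es x. norm (dpow M f n x v) \<le> C * lam ^ n * norm v) \<and>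
         (\<forall>n. \<forall>v\<in>Eu x. norm v \<le> C * lam ^ n * norm (dpow M f n x v))))"

definition stable_leaf :: "'a::euclidean_space set \<Rightarrow> ('a \<Rightarrow> 'a) \<Rightarrow> 'a \<Rightarrow> 'a set" where
  "stable_leaf M f x0 = {y\<in>M. (\<lambda>n. dist ((f ^^ n) x0) ((f ^^ n) y)) \<longlonglongrightarrow> 0}"

definition invariant_measure :: "'a measure \<Rightarrow> ('a \<Rightarrow> 'a) \<Rightarrow> bool" where
  "invariant_measure \<mu> f \<longleftrightarrow> f \<in> measurable \<mu> \<mu> \<and>
     (\<forall>A\<in>sets \<mu>. emeasure \<mu> (f -` A \<inter> space \<mu>) = emeasure \<mu> A)"

definition ergodic_measure :: "'a measure \<Rightarrow> ('a \<Rightarrow> 'a) \<Rightarrow> bool" where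
  "ergodic_measure \<mu> f \<longleftrightarrow> invariant_measure \<mu> f \<and>
     (\<forall>A\<in>sets \<mu>. f -` A \<inter> space \<mu> = A \<longrightarrow> emeasure \<mu> A = 0 \<or> emeasure \<mu> A = 1)"

definition periodic_measure :: "'a measure \<Rightarrow> ('a \<Rightarrow> 'a) \<Rightarrow> bool" where
  "periodic_measure \<mu> f \<longleftrightarrow> (\<exists>p\<in>space \<mu>. \<exists>n>0. (f ^^ n) p = p \<and>
     {(f ^^ k) p | k. k < n} \<in> sets \<mu> \<and> emeasure \<mu> {(f ^^ k) p | k. k < n} = 1)"

end

theory Submission
  imports Defs
begin

(* Let A be a set of positive measure c inside the stable set of x0, i.e. every
   y in A satisfies dist (f^n x0) (f^n y) -> 0.  Since f preserves the measure, the mass of A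
   is transported by f^n into an e-ball around f^n x0, so for every e > 0 the balls
   cball (f^n x0) e eventually carry mass at least c/2.  By compactness the orbit of x0 has a
   cluster point z, and continuity of the measure from above turns this into an atom
   mu {z} >= c/2.  Invariance and injectivity give all points of the orbit of z the same
   positive mass, which a finite measure can only accommodate if the orbit is finite; so the
   orbit of z is eventually periodic.  Its periodic part is an invariant set of positive measure,
   hence of full measure by ergodicity, which is precisely periodicity of mu. *)

section \<open>Invariant measures and their iterates\<close>

lemma restricted_borel_space:
  assumes "sets \<mu> = sets (restrict_space borel M)"
  shows "space \<mu> = M"
  using sets_eq_imp_space_eq[OF assms] by (simp add: space_restrict_space)

lemma restricted_borel_Int:
  assumes "sets \<mu> = sets (restrict_space borel M)" "B \<in> sets borel"
  shows "B \<inter> M \<in> sets \<mu>"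
  using assms by (auto simp: sets_restrict_space)

lemma restricted_borel_closed:
  assumes "sets \<mu> = sets (restrict_space borel M)" "closed B" "B \<subseteq> M"
  shows "B \<in> sets \<mu>"
  using restricted_borel_Int[OF assms(1), of B] assms(2,3) by (simp add: Int_absorb2)

lemma funpow_in_invariant_set:
  assumes "f ` M \<subseteq> M" "x \<in> M"
  shows "(f ^^ n) x \<in> M"
  using assms by (induction n) auto

lemma invariant_measure_funpow:
  assumes "invariant_measure \<mu> f"
  shows "invariant_measure \<mu> (f ^^ n)"
proof (induction n)
  case 0
  show ?case
    by (auto simp: invariant_measure_def Int_absorb2 sets.sets_into_space)
next
  case (Suc n)
  have f_meas: "f \<in> measurable \<mu> \<mu>"
    using assms by (simp add: invariant_measure_def)
  have fn_meas: "(f ^^ n) \<in> measurable \<mu> \<mu>"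
    using Suc.IH by (simp add: invariant_measure_def)
  have "emeasure \<mu> ((f ^^ Suc n) -` A \<inter> space \<mu>) = emeasure \<mu> A" if A: "A \<in> sets \<mu>" for A
  proof -
    define B where "B = (f ^^ n) -` A \<inter> space \<mu>"
    have B_sets: "B \<in> sets \<mu>"
      unfolding B_def using measurable_sets[OF fn_meas A] .
    have "(f ^^ Suc n) -` A \<inter> space \<mu> = f -` B \<inter> space \<mu>"
      using measurable_space[OF f_meas] by (auto simp: B_def funpow_swap1)
    then have "emeasure \<mu> ((f ^^ Suc n) -` A \<inter> space \<mu>) = emeasure \<mu> B"
      using assms B_sets by (simp add: invariant_measure_def)
    also have "\<dots> = emeasure \<mu> A"
      using Suc.IH A by (simp add: invariant_measure_def B_def)
    finally show ?thesis .
  qed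
  moreover have "(f ^^ Suc n) \<in> measurable \<mu> \<mu>"
    by (rule measurable_compose_n[OF f_meas])
  ultimately show ?case
    unfolding invariant_measure_def by blast
qed

lemma invariant_measure_preimage:
  assumes "finite_measure \<mu>" "invariant_measure \<mu> f" "A \<in> sets \<mu>"
  shows "measure \<mu> (f -` A \<inter> space \<mu>) = measure \<mu> A"
  using assms by (simp add: invariant_measure_def measure_def)

lemma invariant_measure_atom_iterate:
  fixes \<mu> :: "'a::t1_space measure"
  assumes "finite_measure \<mu>" "sets \<mu> = sets (restrict_space borel M)"
    and "invariant_measure \<mu> f" "inj_on f M" "f ` M \<subseteq> M" "w \<in> M"
  shows "measure \<mu> {(f ^^ k) w} = measure \<mu> {w}"
proof (induction k)
  case (Suc k)
  have space: "space \<mu> = M"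
    by (rule restricted_borel_space[OF assms(2)])
  have v_in: "(f ^^ k) w \<in> M"
    using funpow_in_invariant_set[OF assms(5,6)] .
  have "f -` {f ((f ^^ k) w)} \<inter> space \<mu> = {(f ^^ k) w}"
    using assms(4) v_in by (auto simp: space inj_on_def)
  moreover have "{f ((f ^^ k) w)} \<in> sets \<mu>"
    using assms(5) v_in by (intro restricted_borel_closed[OF assms(2)]) auto
  ultimately show ?case
    using invariant_measure_preimage[OF assms(1,3)] Suc.IH by fastforce
qed simp

section \<open>Concentration of mass and atoms\<close>

lemma mass_concentrates_along_orbit:
  fixes \<mu> :: "'a::metric_space measure"
  assumes "finite_measure \<mu>" "sets \<mu> = sets (restrict_space borel M)"
    and "\<And>n. invariant_measure \<mu> (T n)"
    and "A \<in> sets \<mu>" "\<And>y. y \<in> A \<Longrightarrow> (\<lambda>n. dist (T n x0) (T n y)) \<longlonglongrightarrow> 0"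
    and "e > 0" "t < measure \<mu> A"
  shows "eventually (\<lambda>n. t < measure \<mu> (cball (T n x0) e \<inter> M)) sequentially"
proof -
  interpret finite_measure \<mu> by fact
  have space: "space \<mu> = M"
    by (rule restricted_borel_space[OF assms(2)])
  have ball_sets: "cball x e \<inter> M \<in> sets \<mu>" for x
    by (rule restricted_borel_Int[OF assms(2)]) simp
  define Ball_pre where "Ball_pre n = T n -` (cball (T n x0) e \<inter> M) \<inter> M" for n
  have Ball_pre_sets: "Ball_pre n \<in> sets \<mu>" for n
  proof -
    have "T n \<in> measurable \<mu> \<mu>"
      using assms(3) by (simp add: invariant_measure_def)
    from measurable_sets[OF this ball_sets] show ?thesis
      by (simp add: Ball_pre_def space)
  qed
  define Close where "Close N = A \<inter> (\<Inter>n\<in>{N..}. Ball_pre n)" for N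
  have Close_sets: "range Close \<subseteq> sets \<mu>"
    using assms(4) Ball_pre_sets by (auto simp: Close_def intro!: sets.countable_INT')
  have "incseq Close"
    by (auto simp: incseq_def Close_def)
  moreover have "(\<Union>N. Close N) = A"
  proof (intro equalityI subsetI)
    fix y assume y: "y \<in> A"
    then have "y \<in> M"
      using sets.sets_into_space[OF assms(4)] space by auto
    obtain N where "\<forall>n\<ge>N. dist (T n x0) (T n y) < e"
      using LIMSEQ_D[OF assms(5)[OF y] assms(6)] by auto
    then have "y \<in> Close N"
      using y \<open>y \<in> M\<close> space assms(3) measurable_space[of "T _" \<mu> \<mu>]
      by (fastforce simp: Close_def Ball_pre_def invariant_measure_def)
    then show "y \<in> (\<Union>N. Close N)" by blast
  qed (auto simp: Close_def)
  ultimately have "(\<lambda>N. measure \<mu> (Close N)) \<longlonglongrightarrow> measure \<mu> A"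
    using finite_Lim_measure_incseq[OF Close_sets] by simp
  then obtain N where N: "t < measure \<mu> (Close N)"
    using assms(7) by (metis eventually_sequentially order_tendstoD(1) order_refl)
  have "t < measure \<mu> (cball (T n x0) e \<inter> M)" if "n \<ge> N" for n
  proof -
    have "measure \<mu> (Close N) \<le> measure \<mu> (Ball_pre n)"
      using that by (intro finite_measure_mono Ball_pre_sets) (auto simp: Close_def)
    also have "\<dots> = measure \<mu> (cball (T n x0) e \<inter> M)"
      using invariant_measure_preimage[OF assms(1,3) ball_sets] by (simp add: Ball_pre_def space)
    finally show ?thesis using N by simp
  qed
  then show ?thesis
    by (auto simp: eventually_sequentially)
qed

text \<open>Continuity from above: a point all of whose closed neighbourhoods have mass at least t
  is an atom of mass at least t.\<close>

lemma atom_of_uniform_neighbourhood_mass: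
  fixes \<mu> :: "'a::metric_space measure"
  assumes "finite_measure \<mu>" "sets \<mu> = sets (restrict_space borel M)" "z \<in> M"
    and "\<And>e. e > 0 \<Longrightarrow> t \<le> measure \<mu> (cball z e \<inter> M)"
  shows "t \<le> measure \<mu> {z}"
proof -
  interpret finite_measure \<mu> by fact
  define D where "D k = cball z (inverse (real (Suc k))) \<inter> M" for k
  have D_sets: "range D \<subseteq> sets \<mu>"
    using restricted_borel_Int[OF assms(2)] by (auto simp: D_def)
  have "decseq D"
    unfolding decseq_def D_def
    by (intro allI impI Int_mono subset_cball order_refl le_imp_inverse_le) auto
  moreover have "(\<Inter>k. D k) = {z}"
  proof (intro equalityI subsetI)
    fix y assume y: "y \<in> (\<Inter>k. D k)"
    have "dist z y \<le> inverse (real (Suc k))" for k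
      using y by (auto simp: D_def)
    then have "dist z y \<le> 0"
      by (intro LIMSEQ_le_const[OF LIMSEQ_inverse_real_of_nat]) simp
    then show "y \<in> {z}" by simp
  qed (use assms(3) in \<open>auto simp: D_def\<close>)
  ultimately have "(\<lambda>k. measure \<mu> (D k)) \<longlonglongrightarrow> measure \<mu> {z}"
    using finite_Lim_measure_decseq[OF D_sets] by simp
  then show ?thesis
    using assms(4) by (intro LIMSEQ_le_const) (auto simp: D_def)
qed

lemma atom_at_cluster_point:
  fixes \<mu> :: "'a::metric_space measure"
  assumes "finite_measure \<mu>" "sets \<mu> = sets (restrict_space borel M)" "compact M"
    and "\<And>n. x n \<in> M"
    and "\<And>e. e > 0 \<Longrightarrow> eventually (\<lambda>n. t < measure \<mu> (cball (x n) e \<inter> M)) sequentially"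
  shows "\<exists>z\<in>M. t \<le> measure \<mu> {z}"
proof -
  interpret finite_measure \<mu> by fact
  obtain z r where z: "z \<in> M" and r: "strict_mono r" and lim: "(x \<circ> r) \<longlonglongrightarrow> z"
    using compact_imp_seq_compact[OF assms(3)] assms(4) unfolding seq_compact_def by meson
  have "t \<le> measure \<mu> (cball z e \<inter> M)" if e: "e > 0" for e
  proof -
    have "eventually (\<lambda>k. t < measure \<mu> (cball (x (r k)) (e/2) \<inter> M)) sequentially"
      using eventually_subseq[OF r assms(5)] e by simp
    moreover have "eventually (\<lambda>k. dist (x (r k)) z < e/2) sequentially"
      using tendstoD[OF lim, of "e/2"] e by (simp add: o_def)
    ultimately obtain k where
      k: "t < measure \<mu> (cball (x (r k)) (e/2) \<inter> M)" "dist (x (r k)) z < e/2"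
      using eventually_happens' by (metis (mono_tags, lifting) eventually_conj sequentially_bot)
    have "cball (x (r k)) (e/2) \<subseteq> cball z e"
    proof
      fix y assume "y \<in> cball (x (r k)) (e/2)"
      then show "y \<in> cball z e"
        using k(2) dist_triangle[of z y "x (r k)"] by (simp add: dist_commute)
    qed
    then have "measure \<mu> (cball (x (r k)) (e/2) \<inter> M) \<le> measure \<mu> (cball z e \<inter> M)"
      by (intro finite_measure_mono Int_mono restricted_borel_Int[OF assms(2)]) auto
    then show ?thesis using k(1) by simp
  qed
  then show ?thesis
    using atom_of_uniform_neighbourhood_mass[OF assms(1,2) z] z by blast
qed

lemma equal_atoms_not_injective:
  fixes \<mu> :: "'a::t1_space measure" and w :: "nat \<Rightarrow> 'a"
  assumes "finite_measure \<mu>" "sets \<mu> = sets (restrict_space borel M)"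
    and "\<And>k. w k \<in> M" "\<And>k. measure \<mu> {w k} = m" "m > 0"
  shows "\<not> inj w"
proof
  assume inj: "inj w"
  interpret finite_measure \<mu> by fact
  have atom_sets: "{w k} \<in> sets \<mu>" for k
    using assms(3) by (intro restricted_borel_closed[OF assms(2)]) auto
  obtain K :: nat where K: "measure \<mu> (space \<mu>) < real K * m"
    using reals_Archimedean3[OF assms(5)] by blast
  have "measure \<mu> (w ` {..<K}) = (\<Sum>y\<in>w ` {..<K}. measure \<mu> {y})"
    using atom_sets by (intro measure_eq_sum_singleton) (auto simp: emeasure_eq_measure)
  also have "\<dots> = (\<Sum>k<K. measure \<mu> {w k})"
    using inj by (simp add: sum.reindex inj_on_subset)
  also have "\<dots> = real K * m"
    using assms(4) by simp
  finally have "real K * m \<le> measure \<mu> (space \<mu>)"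
    using atom_sets by (metis bounded_measure)
  then show False using K by simp
qed

section \<open>Periodic orbits\<close>

lemma periodic_orbit_eq_range:
  assumes "(f ^^ n) p = p" "n > 0"
  shows "{(f ^^ k) p | k. k < n} = range (\<lambda>k. (f ^^ k) p)"
proof (intro equalityI subsetI)
  fix y assume "y \<in> range (\<lambda>k. (f ^^ k) p)"
  then obtain k where "y = (f ^^ (k mod n)) p"
    using funpow_mod_eq[OF assms(1)] by auto
  moreover have "k mod n < n"
    using assms(2) by simp
  ultimately show "y \<in> {(f ^^ k) p | k. k < n}" by blast
qed auto

lemma periodic_orbit_preimage:
  assumes "inj_on f M" "f ` M \<subseteq> M" "p \<in> M" "(f ^^ n) p = p" "n > 0"
  shows "f -` range (\<lambda>k. (f ^^ k) p) \<inter> M = range (\<lambda>k. (f ^^ k) p)"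
proof (intro equalityI subsetI)
  have orbit_M: "(f ^^ k) p \<in> M" for k
    using funpow_in_invariant_set[OF assms(2,3)] .
  fix y assume "y \<in> f -` range (\<lambda>k. (f ^^ k) p) \<inter> M"
  then obtain k where y: "y \<in> M" "f y = (f ^^ k) p" by auto
  have "(f ^^ k) p = (f ^^ (k + n)) p"
    using assms(4) by (simp add: funpow_add)
  also have "k + n = Suc (k + n - 1)"
    using assms(5) by simp
  finally have "(f ^^ k) p = f ((f ^^ (k + n - 1)) p)"
    by simp
  then have "y = (f ^^ (k + n - 1)) p"
    using assms(1) y orbit_M by (auto simp: inj_on_def)
  then show "y \<in> range (\<lambda>k. (f ^^ k) p)" by blast
next
  fix y assume "y \<in> range (\<lambda>k. (f ^^ k) p)"
  then obtain k where "y = (f ^^ k) p" by auto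
  moreover have "(f ^^ k) p \<in> M"
    using funpow_in_invariant_set[OF assms(2,3)] .
  moreover have "f ((f ^^ k) p) = (f ^^ Suc k) p" by simp
  ultimately show "y \<in> f -` range (\<lambda>k. (f ^^ k) p) \<inter> M" by blast
qed

text \<open>The orbit of an atom of an injective invariant map consists of atoms of equal mass,
  so it is finite: some point of it is periodic.\<close>

lemma atom_orbit_periodic:
  fixes \<mu> :: "'a::t1_space measure"
  assumes "finite_measure \<mu>" "sets \<mu> = sets (restrict_space borel M)"
    and "invariant_measure \<mu> f" "inj_on f M" "f ` M \<subseteq> M"
    and "z \<in> M" "measure \<mu> {z} > 0"
  shows "\<exists>p\<in>M. \<exists>n>0. (f ^^ n) p = p \<and> measure \<mu> {p} = measure \<mu> {z}"
proof -
  have orbit_M: "(f ^^ k) z \<in> M" for k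
    using funpow_in_invariant_set[OF assms(5,6)] .
  have atoms: "measure \<mu> {(f ^^ k) z} = measure \<mu> {z}" for k
    by (rule invariant_measure_atom_iterate[OF assms(1-6)])
  have "\<not> inj (\<lambda>k. (f ^^ k) z)"
    by (rule equal_atoms_not_injective[OF assms(1,2) orbit_M atoms assms(7)])
  then obtain i j where ij: "i < j" "(f ^^ i) z = (f ^^ j) z"
    unfolding inj_def by (metis linorder_neqE_nat)
  have "(f ^^ (j - i)) ((f ^^ i) z) = (f ^^ (j - i + i)) z"
    by (simp add: funpow_add)
  also have "j - i + i = j"
    using ij by simp
  finally have "(f ^^ (j - i)) ((f ^^ i) z) = (f ^^ i) z"
    using ij by simp
  then show ?thesis
    using ij orbit_M atoms by (intro bexI[of _ "(f ^^ i) z"] exI[of _ "j - i"]) auto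
qed

text \<open>An ergodic measure of an injective self-map with an atom is periodic: the periodic orbit
  found inside the atom's orbit is an invariant set of positive, hence full, measure.\<close>

lemma ergodic_atom_periodic:
  fixes \<mu> :: "'a::t1_space measure"
  assumes "prob_space \<mu>" "sets \<mu> = sets (restrict_space borel M)"
    and "ergodic_measure \<mu> f" "inj_on f M" "f ` M \<subseteq> M"
    and "z \<in> M" "measure \<mu> {z} > 0"
  shows "periodic_measure \<mu> f"
proof -
  interpret prob_space \<mu> by fact
  have space: "space \<mu> = M"
    by (rule restricted_borel_space[OF assms(2)])
  have "invariant_measure \<mu> f"
    using assms(3) by (simp add: ergodic_measure_def)
  then obtain p n where p: "p \<in> M" "n > 0" "(f ^^ n) p = p" "measure \<mu> {p} > 0"
    using atom_orbit_periodic[OF finite_measure_axioms assms(2) _ assms(4-7)] assms(7) by auto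
  define Orb where "Orb = {(f ^^ k) p | k. k < n}"
  have Orb_range: "Orb = range (\<lambda>k. (f ^^ k) p)"
    unfolding Orb_def using periodic_orbit_eq_range[OF p(3,2)] .
  have Orb_sets: "Orb \<in> sets \<mu>"
  proof (rule restricted_borel_closed[OF assms(2)])
    have "Orb = (\<lambda>k. (f ^^ k) p) ` {..<n}"
      by (auto simp: Orb_def)
    then show "closed Orb"
      by (simp add: finite_imp_closed)
    show "Orb \<subseteq> M"
      using funpow_in_invariant_set[OF assms(5) p(1)] by (auto simp: Orb_range)
  qed
  have "f -` Orb \<inter> space \<mu> = Orb"
    using periodic_orbit_preimage[OF assms(4,5) p(1,3,2)] by (simp add: Orb_range space)
  then have "emeasure \<mu> Orb = 0 \<or> emeasure \<mu> Orb = 1"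
    using assms(3) Orb_sets by (simp add: ergodic_measure_def)
  moreover have "measure \<mu> {p} \<le> measure \<mu> Orb"
    using Orb_sets by (intro finite_measure_mono) (auto simp: Orb_range intro: image_eqI[where x=0])
  ultimately have "emeasure \<mu> Orb = 1"
    using p(4) by (auto simp: emeasure_eq_measure)
  then show ?thesis
    unfolding periodic_measure_def using p Orb_sets by (auto simp: space Orb_def)
qed

theorem mainTheorem7:
  fixes M :: "'a::euclidean_space set" and f :: "'a \<Rightarrow> 'a" and \<mu> :: "'a measure" and x0 :: 'a
  assumes "compact_surface M"
    and "anosov M f"
    and "prob_space \<mu>"
    and "sets \<mu> = sets (restrict_space borel M)"
    and "ergodic_measure \<mu> f"
    and "x0 \<in> M"
    and "\<exists>A\<in>sets \<mu>. A \<subseteq> stable_leaf M f x0 \<and> emeasure \<mu> A > 0"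
  shows "periodic_measure \<mu> f"
proof -
  interpret prob_space \<mu> by fact
  have "bij_betw f M M"
    using assms(2) by (simp add: anosov_def C1_diffeo_on_def)
  then have inj: "inj_on f M" and self_map: "f ` M \<subseteq> M"
    by (auto simp: bij_betw_def)
  have inv: "invariant_measure \<mu> f"
    using assms(5) by (simp add: ergodic_measure_def)
  obtain A where A: "A \<in> sets \<mu>" "A \<subseteq> stable_leaf M f x0" "measure \<mu> A > 0"
    using assms(7) emeasure_eq_measure by auto
  have "eventually (\<lambda>n. measure \<mu> A / 2 < measure \<mu> (cball ((f ^^ n) x0) e \<inter> M)) sequentially"
    if "e > 0" for e
    using A that
    by (intro mass_concentrates_along_orbit[OF finite_measure_axioms assms(4) invariant_measure_funpow[OF inv]])
      (auto simp: stable_leaf_def)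
  moreover have "compact M"
    using assms(1) by (simp add: compact_surface_def)
  ultimately obtain z where z: "z \<in> M" "measure \<mu> A / 2 \<le> measure \<mu> {z}"
    using atom_at_cluster_point[OF finite_measure_axioms assms(4), of "\<lambda>n. (f ^^ n) x0"]
      funpow_in_invariant_set[OF self_map assms(6)]
    by blast
  with A(3) have "measure \<mu> {z} > 0"
    by linarith
  then show ?thesis
    by (rule ergodic_atom_periodic[OF assms(3-5) inj self_map z(1)])
qed

end
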